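(* Let $n, d, d_k$ be positive integers. For a real $n\times n$ matrix $M$, let $\mathrm{softmax}(M)$ denote the row-wise softmax, $(\mathrm{softmax}(M))_{ij} = \exp(M_{ij}) / \sum_{k=1}^n \exp(M_{ik})$, and for a matrix $A$ with strictly positive entries let $\log(A)$ denote the entrywise natural logarithm. A row-stochastic matrix is a real square matrix with nonnegative entries whose rows each sum to $1$. (1) Let $N$ be a positive integer and let $X_1, \dots, X_N \in \mathbb{R}^{n\times d}$ be pairwise distinct matrices. Let $A_1, \dots, A_N \in \mathbb{R}^{n\times n}$ be row-stochastic matrices with strictly positive entries such that $\mathrm{rank}(\log(A_m)) \le d_k$ for every $m = 1, \dots, N$. Then there exist maps $Q, K : \mathbb{R}^{n\times d} \to \mathbb{R}^{n\times d_k}$ such that $$\mathrm{softmax}\!\left(\frac{Q(X_m)K(X_m)^\top}{\sqrt{d_k}}\right) = A_m \quad \text{for all } m = 1, \dots, N.$$ (2) Suppose $d < n-1$ and let $X \in \mathbb{R}^{n\times d}$. Then there exists a row-stochastic matrix $A \in \mathbb{R}^{n\times n}$ with strictly positive entries and $\mathrm{rank}(\log(A)) = 1$ such that there are no matrices $W_q, W_k \in \mathbb{R}^{d\times d_k}$ satisfying $$\mathrm{softmax}\!\left(\frac{(XW_q)(XW_k)^\top}{\sqrt{d_k}}\right) = A.$$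
   Context: This formalizes the "low-rank/linear bottleneck" of standard dot-product attention: with linear query/key maps $Q(X) = XW_q$, $K(X) = XW_k$, the attention matrix is $\mathrm{softmax}(QK^\top/\sqrt{d_k})$ computed row-wise. *)

theory Defs
  imports "HOL-Analysis.Analysis"
begin

definition softmax :: "real^'n^'n \<Rightarrow> real^'n^'n" where
  "softmax M = (\<chi> i j. exp (M $ i $ j) / (\<Sum>k\<in>UNIV. exp (M $ i $ k)))"

definition mat_log :: "real^'n^'m \<Rightarrow> real^'n^'m" where
  "mat_log A = (\<chi> i j. ln (A $ i $ j))"

definition row_stochastic :: "real^'n^'n \<Rightarrow> bool" where
  "row_stochastic A \<longleftrightarrow> (\<forall>i j. 0 \<le> A $ i $ j) \<and> (\<forall>i. (\<Sum>j\<in>UNIV. A $ i $ j) = 1)"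

definition entrywise_pos :: "real^'n^'m \<Rightarrow> bool" where
  "entrywise_pos A \<longleftrightarrow> (\<forall>i j. 0 < A $ i $ j)"

end

(* Softmax inverts the entrywise logarithm on row-stochastic matrices with positive entries,
   and a matrix of rank at most d_k factors as U V^T with U, V of size n x d_k; since the
   inputs X_m are distinct, Q and K may pick such a factorisation separately for each X_m.
   For linear maps, every row of (X W_q)(X W_k)^T lies in the column space of X, while
   softmax determines each row of its argument only up to a multiple of the all-ones vector.
   Hence the rows of log A lie in a space of dimension at most d + 1 < n for every realisable A,
   and a matrix whose rows all equal the softmax of a vector outside that space is not realisable. *)

theory Submission
  imports Defs
begin

lemma sum_exp_pos:
  fixes f :: "'n::finite \<Rightarrow> real"
  shows "0 < (\<Sum>k\<in>UNIV. exp (f k))"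
  by (intro sum_pos) auto

lemma row_stochastic_softmax: "row_stochastic (softmax M)"
  by (simp add: row_stochastic_def softmax_def sum_divide_distrib[symmetric]
      sum_exp_pos less_imp_le sum_exp_pos[THEN dual_order.strict_implies_not_eq])

lemma entrywise_pos_softmax: "entrywise_pos (softmax M)"
  by (simp add: entrywise_pos_def softmax_def sum_pos)

lemma softmax_mat_log:
  assumes "row_stochastic A" "entrywise_pos A"
  shows "softmax (mat_log A) = A"
  using assms by (simp add: softmax_def mat_log_def row_stochastic_def entrywise_pos_def vec_eq_iff)

lemma mat_log_softmax_row:
  "mat_log (softmax M) $ i = M $ i - ln (\<Sum>k\<in>UNIV. exp (M $ i $ k)) *\<^sub>R vec 1"
  by (simp add: mat_log_def softmax_def vec_eq_iff ln_div
      sum_exp_pos sum_exp_pos[THEN dual_order.strict_implies_not_eq])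

lemma softmax_eq_imp_rows_differ_by_constant:
  assumes "softmax M = softmax M'"
  obtains c where "M $ i = M' $ i + c *\<^sub>R vec 1"
proof
  have "M $ i - ln (\<Sum>k\<in>UNIV. exp (M $ i $ k)) *\<^sub>R vec 1
      = M' $ i - ln (\<Sum>k\<in>UNIV. exp (M' $ i $ k)) *\<^sub>R vec 1"
    using assms by (metis mat_log_softmax_row)
  then show "M $ i = M' $ i +
      (ln (\<Sum>k\<in>UNIV. exp (M $ i $ k)) - ln (\<Sum>k\<in>UNIV. exp (M' $ i $ k))) *\<^sub>R vec 1"
    by (simp add: algebra_simps)
qed

lemma row_matrix_matrix_mult: "(A ** B) $ i = A $ i v* B"
  by (simp add: vec_eq_iff matrix_matrix_mult_def vector_matrix_mult_def mult.commute)

lemma row_mult_transpose_mult: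
  fixes P :: "'a::comm_semiring_1^'k^'n" and X :: "'a^'d^'m" and W :: "'a^'k^'d"
  shows "(P ** transpose (X ** W)) $ i = X *v (W *v P $ i)"
proof -
  have "(P ** transpose (X ** W)) $ i = P $ i v* (transpose W ** transpose X)"
    by (simp only: row_matrix_matrix_mult matrix_transpose_mul)
  also have "\<dots> = (P $ i v* transpose W) v* transpose X"
    by (rule vector_matrix_mul_assoc[symmetric])
  finally show ?thesis
    by (simp only: vector_transpose_matrix)
qed

lemma rank_constant_rows:
  assumes "v \<noteq> 0"
  shows "rank ((\<chi> i. v) :: real^'n^'m) = 1"
proof -
  have "rows ((\<chi> i. v) :: real^'n^'m) = {v}"
    by (auto simp: rows_def row_def vec_eq_iff)
  with assms show ?thesis
    by (simp add: row_rank_def dim_singleton)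
qed

lemma rank_factorization:
  fixes M :: "real^'n^'m"
  assumes "rank M \<le> CARD('k)"
  obtains U :: "real^'k^'m" and V :: "real^'k^'n" where "M = U ** transpose V"
proof -
  let ?C = "range ((*v) M)"
  have "dim ?C \<le> dim (UNIV :: (real^'k) set)"
    using assms by (simp add: rank_dim_range dim_UNIV)
  then obtain T :: "(real^'k) set" where T: "subspace T" "dim T = dim ?C"
    by (rule choose_subspace_of_subspace) blast
  moreover have "subspace ?C"
    by (intro linear_subspace_image matrix_vector_mul_linear subspace_UNIV)
  ultimately obtain f where f: "linear f" "f ` T = ?C"
    using subspace_isomorphism by blast
  have "\<forall>j. \<exists>y. column j M = f y"
    using f(2) by (metis matrix_vector_mult_basis rangeI image_iff)
  then obtain y where y: "\<And>j. column j M = f (y j)"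
    by metis
  have "M = matrix f ** transpose (\<chi> j. y j)"
  proof -
    have "M $ i $ j = (matrix f *v y j) $ i" for i j
      using arg_cong[where f="\<lambda>v. v $ i", OF y[of j]] f(1)
      by (simp add: matrix_works column_def)
    then show ?thesis
      by (simp add: vec_eq_iff matrix_vector_mult_def matrix_matrix_mult_def transpose_def)
  qed
  then show thesis
    by (rule that)
qed

lemma exists_query_key_maps:
  fixes X :: "'i \<Rightarrow> 'x" and A :: "'i \<Rightarrow> real^'n^'n"
  assumes "inj_on X I" "c \<noteq> 0"
    and "\<And>m. m \<in> I \<Longrightarrow>
      row_stochastic (A m) \<and> entrywise_pos (A m) \<and> rank (mat_log (A m)) \<le> CARD('k)"
  shows "\<exists>(Q :: 'x \<Rightarrow> real^'k^'n) (K :: 'x \<Rightarrow> real^'k^'n).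
    \<forall>m\<in>I. softmax (c *\<^sub>R (Q (X m) ** transpose (K (X m)))) = A m"
proof -
  have "\<forall>m\<in>I. \<exists>UV :: (real^'k^'n) \<times> (real^'k^'n). mat_log (A m) = fst UV ** transpose (snd UV)"
    using assms(3) by (metis rank_factorization fst_conv snd_conv)
  then obtain UV :: "'i \<Rightarrow> (real^'k^'n) \<times> (real^'k^'n)"
    where UV: "\<And>m. m \<in> I \<Longrightarrow> mat_log (A m) = fst (UV m) ** transpose (snd (UV m))"
    by metis
  define Q where "Q x = (1 / c) *\<^sub>R fst (UV (inv_into I X x))" for x
  define K where "K x = snd (UV (inv_into I X x))" for x
  have "softmax (c *\<^sub>R (Q (X m) ** transpose (K (X m)))) = A m" if "m \<in> I" for m
  proof -
    have "c *\<^sub>R (Q (X m) ** transpose (K (X m))) = mat_log (A m)"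
      using that assms(1,2) by (simp add: Q_def K_def UV scalar_matrix_assoc)
    then show ?thesis
      using that assms(3) softmax_mat_log by metis
  qed
  then show ?thesis
    by blast
qed

lemma exists_not_in_span_insert_range:
  fixes X :: "real^'d^'n"
  assumes "CARD('d) + 1 < CARD('n)"
  obtains w where "w \<notin> span (insert a (range ((*v) X)))"
proof -
  have "dim (range ((*v) X)) \<le> CARD('d)"
    using dim_image_le[OF matrix_vector_mul_linear[of X], of UNIV] by (simp add: dim_UNIV)
  then have "dim (span (insert a (range ((*v) X)))) < dim (UNIV :: (real^'n) set)"
    using assms by (simp add: dim_span dim_insert dim_UNIV)
  then have "span (insert a (range ((*v) X))) \<noteq> UNIV"
    by (metis order_less_irrefl)
  then show thesis
    using that by blast
qed

lemma exists_rank_one_attention_not_linear: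
  fixes X :: "real^'d^'n"
  assumes "CARD('d) + 1 < CARD('n)"
  shows "\<exists>A :: real^'n^'n. row_stochastic A \<and> entrywise_pos A \<and> rank (mat_log A) = 1 \<and>
    \<not> (\<exists>(Wq :: real^'k^'d) (Wk :: real^'k^'d).
          softmax (c *\<^sub>R ((X ** Wq) ** transpose (X ** Wk))) = A)"
proof -
  define S where "S = span (insert (vec 1) (range ((*v) X)))"
  obtain w where w: "w \<notin> S"
    using exists_not_in_span_insert_range[OF assms] unfolding S_def by blast
  have one: "vec 1 \<in> S"
    unfolding S_def by (simp add: span_base)
  define A :: "real^'n^'n" where "A = softmax (\<chi> i. w)"
  define v where "v = w - ln (\<Sum>k\<in>UNIV. exp (w $ k)) *\<^sub>R vec 1"
  have "v \<noteq> 0"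
    using w one unfolding v_def S_def by (metis eq_iff_diff_eq_0 span_mul)
  moreover have "mat_log A = (\<chi> i. v)"
    unfolding vec_eq_iff[of "mat_log A"] by (simp add: A_def v_def mat_log_softmax_row)
  ultimately have "rank (mat_log A) = 1"
    by (simp add: rank_constant_rows)
  moreover have "softmax (c *\<^sub>R ((X ** Wq) ** transpose (X ** Wk))) \<noteq> A"
    for Wq Wk :: "real^'k^'d"
  proof
    fix i :: 'n
    assume "softmax (c *\<^sub>R ((X ** Wq) ** transpose (X ** Wk))) = A"
    then obtain t where "(c *\<^sub>R (X ** Wq) ** transpose (X ** Wk)) $ i = w + t *\<^sub>R vec 1"
      unfolding A_def scalar_matrix_assoc
      by (rule softmax_eq_imp_rows_differ_by_constant) simp
    then have "w = X *v (Wk *v (c *\<^sub>R (X ** Wq)) $ i) - t *\<^sub>R vec 1"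
      by (simp add: row_mult_transpose_mult)
    then have "w \<in> S"
      using one unfolding S_def by (metis span_base span_diff span_mul rangeI insertCI)
    with w show False
      by contradiction
  qed
  ultimately show ?thesis
    using row_stochastic_softmax entrywise_pos_softmax unfolding A_def by blast
qed

theorem theorem1:
  shows
  "(\<forall>(N::nat) (X :: nat \<Rightarrow> real^'d^'n) (A :: nat \<Rightarrow> real^'n^'n).
      N > 0 \<longrightarrow> inj_on X {1..N} \<longrightarrow>
      (\<forall>m\<in>{1..N}. row_stochastic (A m) \<and> entrywise_pos (A m) \<and>
                    rank (mat_log (A m)) \<le> CARD('k)) \<longrightarrow>
      (\<exists>(Q :: real^'d^'n \<Rightarrow> real^'k^'n) (K :: real^'d^'n \<Rightarrow> real^'k^'n).
         \<forall>m\<in>{1..N}.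
           softmax ((1 / sqrt (real CARD('k))) *\<^sub>R (Q (X m) ** transpose (K (X m)))) = A m))
   \<and>
   (CARD('d) < CARD('n) - 1 \<longrightarrow>
      (\<forall>X :: real^'d^'n. \<exists>A :: real^'n^'n.
         row_stochastic A \<and> entrywise_pos A \<and> rank (mat_log A) = 1 \<and>
         \<not> (\<exists>(Wq :: real^'k^'d) (Wk :: real^'k^'d).
              softmax ((1 / sqrt (real CARD('k))) *\<^sub>R ((X ** Wq) ** transpose (X ** Wk))) = A)))"
  by (intro conjI allI impI exists_query_key_maps exists_rank_one_attention_not_linear) auto

end
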